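(* Let $G \leq \mathrm{Aut}(K_{n,n})$ be a subgroup isomorphic to $S_4$, and let $H \leq G$ be its subgroup isomorphic to $A_4$. Suppose there is an embedding $\Gamma$ of $K_{n,n}$ in $S^3$ such that $G$ is induced on $\Gamma$ by an isomorphic subgroup $\widehat{G} \leq \mathrm{SO}(4)$. Assume each involution of $H$ fixes exactly two vertices of $V$ and exactly two vertices of $W$. Then every element of $G$ maps $V$ to $V$ and $W$ to $W$.
   Context: $K_{n,n}$ is the complete bipartite graph with vertex sets $V$, $W$ of $n$ vertices each; every vertex of $V$ is adjacent to every vertex of $W$, and there are no other edges. $S^3$ is the unit sphere in $\mathbb{R}^4$, on which $\mathrm{SO}(4)$ acts by isometries. "$G$ is induced on $\Gamma$ by an isomorphic subgroup $\widehat{G} \leq \mathrm{SO}(4)$" means every element of $\widehat{G}$ leaves $\Gamma$ setwise invariant, and restricting to $\Gamma$ gives an isomorphism from $\widehat{G}$ onto $G$. An involution is an element of order 2. *)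

theory Defs
  imports "HOL-Analysis.Analysis" "HOL-Algebra.Sym_Groups"
begin

type_synonym vtx = "nat + nat"

definition partV :: "nat \<Rightarrow> vtx set" where "partV n = Inl ` {..<n}"
definition partW :: "nat \<Rightarrow> vtx set" where "partW n = Inr ` {..<n}"
definition Knn_verts :: "nat \<Rightarrow> vtx set" where "Knn_verts n = partV n \<union> partW n"
definition Knn_adj :: "nat \<Rightarrow> vtx \<Rightarrow> vtx \<Rightarrow> bool" where
  "Knn_adj n x y \<longleftrightarrow> (x \<in> partV n \<and> y \<in> partW n) \<or> (x \<in> partW n \<and> y \<in> partV n)"

definition Aut_Knn :: "nat \<Rightarrow> (vtx \<Rightarrow> vtx) set" where
  "Aut_Knn n = {f. f permutes Knn_verts n \<and>
     (\<forall>x\<in>Knn_verts n. \<forall>y\<in>Knn_verts n. Knn_adj n x y \<longleftrightarrow> Knn_adj n (f x) (f y))}"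

definition perm_group :: "(vtx \<Rightarrow> vtx) set \<Rightarrow> (vtx \<Rightarrow> vtx) monoid" where
  "perm_group S = \<lparr>carrier = S, mult = (\<circ>), one = id\<rparr>"

definition matrix_group :: "(real^4^4) set \<Rightarrow> (real^4^4) monoid" where
  "matrix_group S = \<lparr>carrier = S, mult = (**), one = mat 1\<rparr>"

definition SO4 :: "(real^4^4) set" where
  "SO4 = {A. orthogonal_matrix A \<and> det A = 1}"

definition S3 :: "(real^4) set" where "S3 = sphere 0 1"

definition Knn_embedding :: "nat \<Rightarrow> (vtx \<Rightarrow> real^4) \<Rightarrow> (vtx \<Rightarrow> vtx \<Rightarrow> real \<Rightarrow> real^4) \<Rightarrow> bool" where
  "Knn_embedding n emb gam \<longleftrightarrow>
     inj_on emb (Knn_verts n) \<and> emb ` Knn_verts n \<subseteq> S3 \<and>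
     (\<forall>v\<in>partV n. \<forall>w\<in>partW n.
        arc (gam v w) \<and> pathstart (gam v w) = emb v \<and> pathfinish (gam v w) = emb w \<and>
        path_image (gam v w) \<subseteq> S3 \<and>
        path_image (gam v w) \<inter> emb ` Knn_verts n = {emb v, emb w}) \<and>
     (\<forall>v\<in>partV n. \<forall>w\<in>partW n. \<forall>v'\<in>partV n. \<forall>w'\<in>partW n. (v, w) \<noteq> (v', w') \<longrightarrow>
        path_image (gam v w) \<inter> path_image (gam v' w') \<subseteq> emb ` ({v, w} \<inter> {v', w'}))"

definition edge_image :: "nat \<Rightarrow> (vtx \<Rightarrow> vtx \<Rightarrow> real \<Rightarrow> real^4) \<Rightarrow> vtx \<Rightarrow> vtx \<Rightarrow> (real^4) set" where
  "edge_image n gam x y = (if x \<in> partV n then path_image (gam x y) else path_image (gam y x))"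

definition embedded_graph :: "nat \<Rightarrow> (vtx \<Rightarrow> real^4) \<Rightarrow> (vtx \<Rightarrow> vtx \<Rightarrow> real \<Rightarrow> real^4) \<Rightarrow> (real^4) set" where
  "embedded_graph n emb gam = emb ` Knn_verts n \<union> (\<Union>v\<in>partV n. \<Union>w\<in>partW n. path_image (gam v w))"

definition induced_by :: "nat \<Rightarrow> (vtx \<Rightarrow> real^4) \<Rightarrow> (vtx \<Rightarrow> vtx \<Rightarrow> real \<Rightarrow> real^4) \<Rightarrow>
    (vtx \<Rightarrow> vtx) set \<Rightarrow> (real^4^4) set \<Rightarrow> bool" where
  "induced_by n emb gam G Ghat \<longleftrightarrow> Ghat \<subseteq> SO4 \<and>
     (\<forall>A\<in>Ghat. (\<lambda>x. A *v x) ` embedded_graph n emb gam = embedded_graph n emb gam) \<and>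
     (\<exists>phi. phi \<in> iso (matrix_group Ghat) (perm_group G) \<and>
        (\<forall>A\<in>Ghat. (\<forall>v\<in>Knn_verts n. A *v emb v = emb (phi A v)) \<and>
           (\<forall>v\<in>partV n. \<forall>w\<in>partW n.
              (\<lambda>x. A *v x) ` path_image (gam v w) = edge_image n gam (phi A v) (phi A w))))"

end

theory Submission
  imports Defs
begin

text \<open>Swapping the two sides of $K_{n,n}$ defines a homomorphism $G \cong S_4 \to \mathbb{Z}/2$.
If it were nontrivial it would be the sign, so the image $g$ of a 4-cycle would exchange $V$ and $W$.
Its square $h = g^2$ lies in the index-two subgroup $H$ and is a nontrivial involution, so it fixes
some $v \in V$, and $g$ swaps $v$ and $w = g v$. A matrix $A \in SO(4)$ inducing $g$ then maps the
arc $vw$ onto itself with its ends exchanged, so it fixes a (nonzero) point of the arc and negates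
$emb\ v - emb\ w$. An element of $SO(4)$ with eigenvalues $1$ and $-1$ is an involution, hence
$h = id$, a contradiction.\<close>

lemma group_perm_group_if_iso:
  assumes K: "group K" and iso: "K \<cong> perm_group X" and inj: "\<And>f. f \<in> X \<Longrightarrow> inj f"
  shows "group (perm_group X)"
proof -
  obtain \<psi> where \<psi>: "\<psi> \<in> iso K (perm_group X)" using iso by (auto simp: is_iso_def)
  interpret K: group K by (rule K)
  have hom: "\<psi> \<in> hom K (perm_group X)" using \<psi> by (simp add: iso_def)
  have one_X: "\<psi> \<one>\<^bsub>K\<^esub> \<in> X"
    using hom_in_carrier[OF hom K.one_closed] by (simp add: perm_group_def)
  have "\<psi> \<one>\<^bsub>K\<^esub> \<circ> \<psi> \<one>\<^bsub>K\<^esub> = \<psi> \<one>\<^bsub>K\<^esub> \<circ> id"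
    using hom_mult[OF hom K.one_closed K.one_closed] by (simp add: perm_group_def)
  then have "\<psi> \<one>\<^bsub>K\<^esub> = id"
    using inj[OF one_X] by (metis comp_apply id_apply injD ext)
  with K.iso_imp_img_group[OF \<psi>] show ?thesis by (simp add: perm_group_def)
qed

lemma subgroup_perm_group:
  assumes "group (perm_group G)" "group (perm_group H)" "H \<subseteq> G"
  shows "subgroup H (perm_group G)"
  using group.group_incl_imp_subgroup[OF assms(1)] assms(2,3) by (simp add: perm_group_def)

lemma (in group) square_in_index_two_subgroup:
  assumes H: "subgroup H G" and fin: "finite (carrier G)"
    and card: "card (carrier G) = 2 * card H" and x: "x \<in> carrier G"
  shows "x \<otimes> x \<in> H"
proof (rule ccontr)
  assume xx: "x \<otimes> x \<notin> H"
  have HG: "H \<subseteq> carrier G" using H by (rule subgroup.subset)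
  have xH: "x \<notin> H" using xx H by (meson subgroup.m_closed)
  let ?xH = "(\<lambda>h. x \<otimes> h) ` H"
  have disj: "?xH \<inter> H = {}"
  proof (rule ccontr)
    assume "?xH \<inter> H \<noteq> {}"
    then obtain h where h: "h \<in> H" "x \<otimes> h \<in> H" by blast
    then have "x \<otimes> h \<otimes> inv h \<in> H" using H by (meson subgroup.m_closed subgroup.m_inv_closed)
    then show False using xH h HG x by (simp add: m_assoc subsetD)
  qed
  have "card ?xH = card H" using x HG by (intro card_image inj_onI) (metis Units_eq Units_l_cancel subsetD)
  then have "card (?xH \<union> H) = card (carrier G)"
    using card_Un_disjoint[of ?xH H] fin HG disj card by (simp add: finite_subset)
  moreover have "?xH \<union> H \<subseteq> carrier G" using x HG by auto
  ultimately have "?xH \<union> H = carrier G" using fin by (simp add: card_subset_eq)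
  then obtain h where "h \<in> H" "x \<otimes> x = x \<otimes> h" using xx x by blast
  then show False using xH x HG by (metis Units_eq Units_l_cancel subsetD)
qed

lemma square_in_alt_subgroup:
  assumes inj: "\<And>f. f \<in> G \<Longrightarrow> inj f" and GS4: "sym_group 4 \<cong> perm_group G"
    and HG: "H \<subseteq> G" and HA4: "alt_group 4 \<cong> perm_group H" and g: "g \<in> G"
  shows "g \<circ> g \<in> H"
proof -
  have "group (perm_group G)" by (rule group_perm_group_if_iso[OF sym_group_is_group GS4 inj])
  moreover have "group (perm_group H)" using group_perm_group_if_iso[OF alt_group_is_group HA4] inj HG by blast
  ultimately interpret G: group "perm_group G" + H: subgroup H "perm_group G"
    using subgroup_perm_group HG by auto
  have "card G = 24" "card H = 12"
    using iso_same_card[OF GS4] iso_same_card[OF HA4] sym_group_card_carrier[of 4]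
      alt_group_card_carrier[of 4] by (simp_all add: perm_group_def fact_numeral)
  then show ?thesis
    using G.square_in_index_two_subgroup[OF H.subgroup_axioms] g
    by (simp add: perm_group_def card_ge_0_finite)
qed

lemma transposition_character_swap:
  assumes mult: "\<And>\<sigma> \<tau>. \<sigma> permutes S \<Longrightarrow> \<tau> permutes S \<Longrightarrow> P (\<sigma> \<circ> \<tau>) \<longleftrightarrow> (P \<sigma> \<longleftrightarrow> P \<tau>)"
    and "a \<in> S" "b \<in> S" "c \<in> S" "a \<noteq> c" "b \<noteq> c"
  shows "P (Transposition.transpose a c) \<longleftrightarrow> P (Transposition.transpose b c)"
proof -
  let ?t = Transposition.transpose
  have "?t a c = ?t a b \<circ> ?t b c \<circ> ?t a b" using assms by (simp add: transpose_comp_triple)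
  moreover have "?t a b permutes S" "?t b c permutes S" using assms by (simp_all add: permutes_swap_id)
  ultimately show ?thesis using mult by (simp add: permutes_compose) blast
qed

lemma permutes_character_cases:
  assumes "finite S"
    and mult: "\<And>\<sigma> \<tau>. \<sigma> permutes S \<Longrightarrow> \<tau> permutes S \<Longrightarrow> P (\<sigma> \<circ> \<tau>) \<longleftrightarrow> (P \<sigma> \<longleftrightarrow> P \<tau>)"
  shows "(\<forall>\<sigma>. \<sigma> permutes S \<longrightarrow> P \<sigma>) \<or> (\<forall>\<sigma>. \<sigma> permutes S \<longrightarrow> (P \<sigma> \<longleftrightarrow> evenperm \<sigma>))"
proof -
  let ?t = Transposition.transpose
  define T where "T \<longleftrightarrow> (\<forall>a\<in>S. \<forall>b\<in>S. a \<noteq> b \<longrightarrow> P (?t a b))"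
  have swap: "P (?t a c) \<longleftrightarrow> P (?t b c)" if "a \<in> S" "b \<in> S" "c \<in> S" "a \<noteq> c" "b \<noteq> c" for a b c
    using transposition_character_swap[OF mult that] .
  have same: "P (?t a b) \<longleftrightarrow> P (?t c d)"
    if "a \<in> S" "b \<in> S" "c \<in> S" "d \<in> S" "a \<noteq> b" "c \<noteq> d" for a b c d
  proof (cases "c = b")
    case True
    then show ?thesis using swap[of d a b] that by (simp add: transpose_commute[of b d])
  next
    case False
    then show ?thesis using swap[of a c b] swap[of b d c] that
      by (simp add: transpose_commute[of b c] transpose_commute[of d c])
  qed
  have T: "P (?t a b) \<longleftrightarrow> T" if "a \<in> S" "b \<in> S" "a \<noteq> b" for a b
    unfolding T_def using same that by blast
  have "P \<sigma> \<longleftrightarrow> T \<or> evenperm \<sigma>" if "\<sigma> permutes S" for \<sigma>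
    using that \<open>finite S\<close>
  proof (induction rule: permutes_induct)
    case id
    have "P id" using mult[OF permutes_id permutes_id] by (metis id_comp)
    then show ?case by (simp add: id_def)
  next
    case (swap a b p)
    have "evenperm (?t a b \<circ> p) \<longleftrightarrow> \<not> evenperm p"
      using swap permutes_imp_permutation[OF \<open>finite S\<close>]
      by (simp add: evenperm_comp permutation_swap_id evenperm_swap)
    moreover have "P (?t a b \<circ> p) \<longleftrightarrow> (P (?t a b) \<longleftrightarrow> P p)"
      using swap.hyps by (simp add: mult permutes_swap_id)
    ultimately show ?case using T[OF swap.hyps(1-3)] swap.IH by blast
  qed
  then show ?thesis by blast
qed

lemma four_cycle_exists:
  obtains \<sigma> :: "nat \<Rightarrow> nat"
  where "\<sigma> permutes {1..4}" "\<not> evenperm \<sigma>" "\<sigma> \<circ> \<sigma> \<noteq> id" "(\<sigma> \<circ> \<sigma>) \<circ> (\<sigma> \<circ> \<sigma>) = id"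
proof
  let ?t = "Transposition.transpose :: nat \<Rightarrow> nat \<Rightarrow> nat \<Rightarrow> nat"
  let ?\<sigma> = "?t 1 2 \<circ> ?t 2 3 \<circ> ?t 3 4"
  show "?\<sigma> permutes {1..4}" by (intro permutes_compose permutes_swap_id) auto
  show "\<not> evenperm ?\<sigma>"
    by (simp add: evenperm_comp permutation_compose permutation_swap_id evenperm_swap)
  have "(?\<sigma> \<circ> ?\<sigma>) 1 = 3" by (simp add: Transposition.transpose_def)
  then show "?\<sigma> \<circ> ?\<sigma> \<noteq> id" by (metis id_apply numeral_One numeral_eq_iff semiring_norm(86))
  show "(?\<sigma> \<circ> ?\<sigma>) \<circ> (?\<sigma> \<circ> ?\<sigma>) = id"
  proof
    fix x :: nat
    show "((?\<sigma> \<circ> ?\<sigma>) \<circ> (?\<sigma> \<circ> ?\<sigma>)) x = id x"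
      by (cases "x = 1"; cases "x = 2"; cases "x = 3"; cases "x = 4")
        (simp_all add: Transposition.transpose_def)
  qed
qed

lemma partV_Int_partW: "partV n \<inter> partW n = {}"
  by (auto simp: partV_def partW_def)

lemma Knn_adj_iff:
  assumes "x \<in> Knn_verts n" "y \<in> Knn_verts n"
  shows "Knn_adj n x y \<longleftrightarrow> (x \<in> partV n \<longleftrightarrow> y \<notin> partV n)"
  using assms partV_Int_partW unfolding Knn_adj_def Knn_verts_def by blast

lemma Aut_Knn_same_part_iff:
  assumes f: "f \<in> Aut_Knn n" and "x \<in> Knn_verts n" "y \<in> Knn_verts n"
  shows "(f x \<in> partV n \<longleftrightarrow> f y \<in> partV n) \<longleftrightarrow> (x \<in> partV n \<longleftrightarrow> y \<in> partV n)"
proof -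
  have "f permutes Knn_verts n" using f by (simp add: Aut_Knn_def)
  then have "f x \<in> Knn_verts n" "f y \<in> Knn_verts n" using assms by (simp_all add: permutes_in_image)
  moreover have "Knn_adj n x y \<longleftrightarrow> Knn_adj n (f x) (f y)" using f assms by (simp add: Aut_Knn_def)
  ultimately show ?thesis using Knn_adj_iff assms by blast
qed

lemma image_Int_eq_if_preimage:
  assumes "f ` X = X" "\<And>x. x \<in> X \<Longrightarrow> f x \<in> B \<longleftrightarrow> x \<in> A"
  shows "f ` (X \<inter> A) = X \<inter> B"
proof
  show "f ` (X \<inter> A) \<subseteq> X \<inter> B" using assms by auto
  show "X \<inter> B \<subseteq> f ` (X \<inter> A)"
  proof
    fix y assume "y \<in> X \<inter> B"
    then obtain x where "x \<in> X" "y = f x" using assms(1) by (metis IntD1 imageE)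
    then show "y \<in> f ` (X \<inter> A)" using assms(2) \<open>y \<in> X \<inter> B\<close> by blast
  qed
qed

lemma Aut_Knn_preserves_or_swaps_parts:
  assumes f: "f \<in> Aut_Knn n" and "0 < n"
  shows "(f ` partV n = partV n \<and> f ` partW n = partW n) \<or>
         (f ` partV n = partW n \<and> f ` partW n = partV n)"
proof -
  let ?X = "Knn_verts n" and ?V = "partV n"
  have img: "f ` ?X = ?X" using f by (simp add: Aut_Knn_def permutes_image)
  have v0: "Inl 0 \<in> ?X" "Inl 0 \<in> ?V"
    using \<open>0 < n\<close> by (simp_all add: Knn_verts_def partV_def)
  have parts: "?V = ?X \<inter> ?V" "partW n = ?X \<inter> - ?V"
    using partV_Int_partW by (auto simp: Knn_verts_def)
  have side: "f x \<in> ?V \<longleftrightarrow> (x \<in> ?V \<longleftrightarrow> f (Inl 0) \<in> ?V)" if "x \<in> ?X" for x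
    using Aut_Knn_same_part_iff[OF f that v0(1)] v0(2) by blast
  show ?thesis
  proof (cases "f (Inl 0) \<in> ?V")
    case True
    then have "f ` (?X \<inter> ?V) = ?X \<inter> ?V" "f ` (?X \<inter> - ?V) = ?X \<inter> - ?V"
      using side by (auto intro!: image_Int_eq_if_preimage[OF img])
    then show ?thesis using parts by simp
  next
    case False
    then have "f ` (?X \<inter> ?V) = ?X \<inter> - ?V" "f ` (?X \<inter> - ?V) = ?X \<inter> ?V"
      using side by (auto intro!: image_Int_eq_if_preimage[OF img])
    then show ?thesis using parts by simp
  qed
qed

lemma Aut_Knn_comp_preserves_partV_iff:
  assumes f: "f \<in> Aut_Knn n" and g: "g \<in> Aut_Knn n" and "0 < n"
  shows "(f \<circ> g) ` partV n = partV n \<longleftrightarrow> (f ` partV n = partV n \<longleftrightarrow> g ` partV n = partV n)"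
proof -
  have ne: "partV n \<noteq> partW n" using \<open>0 < n\<close> by (auto simp: partV_def partW_def)
  have "(f \<circ> g) ` partV n = f ` (g ` partV n)" by (simp add: image_comp)
  then show ?thesis
    using Aut_Knn_preserves_or_swaps_parts[OF f \<open>0 < n\<close>] Aut_Knn_preserves_or_swaps_parts[OF g \<open>0 < n\<close>]
    by (elim disjE conjE) (simp_all add: ne ne[symmetric])
qed

lemma side_swapping_element_of_order_four:
  assumes GAut: "G \<subseteq> Aut_Knn n" and "0 < n"
    and iso: "sym_group 4 \<cong> perm_group G" and grp: "group (perm_group G)"
    and swaps: "\<exists>g\<in>G. g ` partV n \<noteq> partV n"
  obtains g where "g \<in> G" "g ` partV n = partW n" "g \<circ> g \<noteq> id" "(g \<circ> g) \<circ> (g \<circ> g) = id"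
proof -
  obtain \<phi> where "\<phi> \<in> iso (sym_group 4) (perm_group G)" using iso by (auto simp: is_iso_def)
  then have hom: "\<phi> \<in> hom (sym_group 4) (perm_group G)"
    and bij: "bij_betw \<phi> {\<sigma>. \<sigma> permutes {1..4}} G"
    by (auto simp: iso_def perm_group_def sym_group_def)
  have \<phi>_comp: "\<phi> (\<sigma> \<circ> \<tau>) = \<phi> \<sigma> \<circ> \<phi> \<tau>" if "\<sigma> permutes {1..4}" "\<tau> permutes {1..4}" for \<sigma> \<tau>
    using hom_mult[OF hom] that by (simp add: sym_group_carrier sym_group_mult perm_group_def)
  have \<phi>_id: "\<phi> id = id"
    using hom_one[OF hom sym_group_is_group grp] by (simp add: sym_group_one perm_group_def)
  have \<phi>_G: "\<phi> \<sigma> \<in> Aut_Knn n" if "\<sigma> permutes {1..4}" for \<sigma>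
    using bij that GAut by (auto simp: bij_betw_def)
  define P where "P \<sigma> \<longleftrightarrow> \<phi> \<sigma> ` partV n = partV n" for \<sigma>
  have "P (\<sigma> \<circ> \<tau>) \<longleftrightarrow> (P \<sigma> \<longleftrightarrow> P \<tau>)" if "\<sigma> permutes {1..4}" "\<tau> permutes {1..4}" for \<sigma> \<tau>
    unfolding P_def \<phi>_comp[OF that]
    by (rule Aut_Knn_comp_preserves_partV_iff[OF \<phi>_G \<phi>_G \<open>0 < n\<close>]) (use that in auto)
  then consider "\<forall>\<sigma>. \<sigma> permutes {1..4} \<longrightarrow> P \<sigma>" | "\<forall>\<sigma>. \<sigma> permutes {1..4} \<longrightarrow> (P \<sigma> \<longleftrightarrow> evenperm \<sigma>)"
    using permutes_character_cases[of "{1..4::nat}" P] by auto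
  then show thesis
  proof cases
    case 1
    then show thesis using swaps bij by (auto simp: P_def bij_betw_def)
  next
    case 2
    obtain \<sigma> :: "nat \<Rightarrow> nat" where \<sigma>: "\<sigma> permutes {1..4}" "\<not> evenperm \<sigma>" "\<sigma> \<circ> \<sigma> \<noteq> id" "(\<sigma> \<circ> \<sigma>) \<circ> (\<sigma> \<circ> \<sigma>) = id"
      by (rule four_cycle_exists)
    have \<sigma>\<sigma>: "\<sigma> \<circ> \<sigma> permutes {1..4}" using \<sigma>(1) \<sigma>(1) by (rule permutes_compose)
    show thesis
    proof
      show "\<phi> \<sigma> \<in> G" using bij \<sigma>(1) by (auto simp: bij_betw_def)
      show "\<phi> \<sigma> ` partV n = partW n"
        using Aut_Knn_preserves_or_swaps_parts[OF \<phi>_G[OF \<sigma>(1)] \<open>0 < n\<close>] 2 \<sigma>(1,2) P_def by blast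
      have "\<phi> (\<sigma> \<circ> \<sigma>) \<noteq> \<phi> id"
        using \<sigma>(3) bij \<sigma>\<sigma> permutes_id by (auto simp: bij_betw_def dest: inj_onD)
      then show "\<phi> \<sigma> \<circ> \<phi> \<sigma> \<noteq> id" using \<phi>_comp[OF \<sigma>(1) \<sigma>(1)] \<phi>_id by simp
      show "(\<phi> \<sigma> \<circ> \<phi> \<sigma>) \<circ> (\<phi> \<sigma> \<circ> \<phi> \<sigma>) = id"
        using \<phi>_comp[OF \<sigma>\<sigma> \<sigma>\<sigma>] \<phi>_comp[OF \<sigma>(1) \<sigma>(1)] \<sigma>(4) \<phi>_id by simp
    qed
  qed
qed

lemma arc_fixed_point_if_endpoints_swapped:
  fixes \<gamma> :: "real \<Rightarrow> 'a::real_normed_vector" and f :: "'a \<Rightarrow> 'a"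
  assumes arc: "arc \<gamma>" and cf: "continuous_on (path_image \<gamma>) f"
    and fim: "f ` path_image \<gamma> = path_image \<gamma>"
    and f0: "f (pathstart \<gamma>) = pathfinish \<gamma>" and f1: "f (pathfinish \<gamma>) = pathstart \<gamma>"
  shows "\<exists>z\<in>path_image \<gamma>. f z = z"
proof -
  obtain k where hk: "homeomorphism {0..1} (path_image \<gamma>) \<gamma> k"
    using homeomorphism_arc[OF arc] by blast
  have kc: "continuous_on (path_image \<gamma>) k" and gc: "continuous_on {0..1} \<gamma>"
    and gim: "\<gamma> ` {0..1} = path_image \<gamma>"
    and kg: "\<And>t. t \<in> {0..1} \<Longrightarrow> k (\<gamma> t) = t" and gk: "\<And>y. y \<in> path_image \<gamma> \<Longrightarrow> \<gamma> (k y) = y"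
    using hk by (auto simp: homeomorphism_def)
  define F where "F t = k (f (\<gamma> t)) - t" for t
  have cF: "continuous_on {0..1} F"
    unfolding F_def
  proof (intro continuous_intros)
    show "continuous_on {0..1} (\<lambda>t. k (f (\<gamma> t)))"
      by (rule continuous_on_compose2[OF kc continuous_on_compose2[OF cf gc]]) (use gim fim in auto)
  qed
  have "F 0 = 1" using f0 kg[of 1] by (simp add: F_def pathstart_def pathfinish_def)
  moreover have "F 1 = -1" using f1 kg[of 0] by (simp add: F_def pathstart_def pathfinish_def)
  ultimately have "\<exists>x. 0 \<le> x \<and> x \<le> 1 \<and> F x = 0"
    by (intro IVT2'[OF _ _ _ cF]) auto
  then obtain t where t: "0 \<le> t" "t \<le> 1" "F t = 0" by blast
  have gt: "\<gamma> t \<in> path_image \<gamma>" using t by (simp add: path_image_def)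
  have fgt: "f (\<gamma> t) \<in> path_image \<gamma>" using gt fim by (metis imageI)
  have "k (f (\<gamma> t)) = t" using t(3) by (simp add: F_def)
  then have "f (\<gamma> t) = \<gamma> t"
    using gk[OF fgt] by simp
  then show ?thesis using gt by blast
qed

lemma exists_unit_orthogonal_to:
  fixes S :: "'a::euclidean_space set"
  assumes "dim S < DIM('a)"
  obtains u where "norm u = 1" "\<And>y. y \<in> S \<Longrightarrow> u \<bullet> y = 0"
proof -
  obtain u where u: "u \<noteq> 0" "\<And>y. y \<in> span S \<Longrightarrow> orthogonal u y"
    using orthogonal_to_subspace_exists[OF assms] by blast
  show thesis
  proof
    show "norm (u /\<^sub>R norm u) = 1" using u(1) by simp
    show "(u /\<^sub>R norm u) \<bullet> y = 0" if "y \<in> S" for y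
      using u(2)[of y] that by (simp add: span_base orthogonal_def)
  qed
qed

lemma orthonormal_pair_extends_to_orthogonal_matrix:
  fixes e1 e2 :: "real^4"
  assumes "norm e1 = 1" "norm e2 = 1" "e1 \<bullet> e2 = 0"
  obtains Q :: "real^4^4" where "orthogonal_matrix Q" "column 1 Q = e1" "column 2 Q = e2"
proof -
  have "dim {e1, e2} \<le> card {e1, e2}" by (rule dim_le_card) (auto intro: span_base)
  also have "\<dots> < DIM(real^4)" by (simp add: card_insert_if)
  finally obtain e3 where e3: "norm e3 = 1" "e3 \<bullet> e1 = 0" "e3 \<bullet> e2 = 0"
    by (rule exists_unit_orthogonal_to) auto
  have "dim {e1, e2, e3} \<le> card {e1, e2, e3}" by (rule dim_le_card) (auto intro: span_base)
  also have "\<dots> < DIM(real^4)" by (simp add: card_insert_if)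
  finally obtain e4 where e4: "norm e4 = 1" "e4 \<bullet> e1 = 0" "e4 \<bullet> e2 = 0" "e4 \<bullet> e3 = 0"
    by (rule exists_unit_orthogonal_to) auto
  define e :: "4 \<Rightarrow> real^4" where
    "e i = (if i = 1 then e1 else if i = 2 then e2 else if i = 3 then e3 else e4)" for i
  define Q :: "real^4^4" where "Q = (\<chi> i j. e j $ i)"
  have col: "column j Q = e j" for j by (simp add: Q_def column_def vec_eq_iff)
  have "orthogonal_matrix Q"
    unfolding orthogonal_matrix_orthonormal_columns col orthogonal_def
    using assms e3 e4 exhaust_4 by (auto simp: e_def inner_commute)
  moreover have "column 1 Q = e1" "column 2 Q = e2" using col[of 1] col[of 2] by (simp_all add: e_def)
  ultimately show thesis by (rule that)
qed

lemma det_4_block_diag: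
  fixes A :: "real^4^4"
  assumes "A$1$1 = 1" "A$2$2 = -1" "A$1$2 = 0" "A$1$3 = 0" "A$1$4 = 0"
   "A$2$1 = 0" "A$2$3 = 0" "A$2$4 = 0" "A$3$1 = 0" "A$3$2 = 0" "A$4$1 = 0" "A$4$2 = 0"
  shows "det A = - (A$3$3 * A$4$4 - A$3$4 * A$4$3)"
proof -
  have f1: "finite {2::4, 3, 4}" "1 \<notin> {2::4, 3, 4}" by auto
  have f2: "finite {3::4, 4}" "2 \<notin> {3::4, 4}" by auto
  have f3: "finite {4::4}" "3 \<notin> {4::4}" by auto
  show ?thesis
    unfolding det_def UNIV_4
    unfolding sum_over_permutations_insert[OF f1] sum_over_permutations_insert[OF f2]
      sum_over_permutations_insert[OF f3] permutes_sing
    by (simp add: assms sign_swap_id permutation_swap_id sign_compose swap_id_eq)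
qed

lemma orthogonal_matrix_inner:
  fixes M :: "real^'n^'n"
  assumes "orthogonal_matrix M"
  shows "(M *v x) \<bullet> (M *v y) = x \<bullet> y"
proof -
  have "orthogonal_transformation (\<lambda>x. M *v x)"
    using assms by (simp add: orthogonal_transformation_matrix)
  then show ?thesis by (simp add: orthogonal_transformation_def)
qed

lemma orthogonal_det1_axis_reflection_involution:
  fixes M :: "real^4^4"
  assumes oM: "orthogonal_matrix M" and dM: "det M = 1"
    and M1: "M *v axis 1 1 = axis 1 1" and M2: "M *v axis 2 1 = - axis 2 1"
  shows "M ** M = mat 1"
proof -
  have entry: "M $ i $ j = axis i 1 \<bullet> (M *v axis j 1)" for i j
    by (simp add: matrix_vector_mult_basis column_def inner_commute[of "axis i 1"] flip: cart_eq_inner_axis)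
  have row1: "axis 1 1 \<bullet> (M *v axis j 1) = axis 1 1 \<bullet> axis j (1::real)" for j
    using orthogonal_matrix_inner[OF oM, of "axis 1 1" "axis j 1"] M1 by simp
  have row2: "axis 2 1 \<bullet> (M *v axis j 1) = - (axis 2 1 \<bullet> axis j (1::real))" for j
    using orthogonal_matrix_inner[OF oM, of "axis 2 1" "axis j 1"] M2 by simp
  have z: "M$1$1 = 1" "M$2$2 = -1" "M$1$2 = 0" "M$1$3 = 0" "M$1$4 = 0"
   "M$2$1 = 0" "M$2$3 = 0" "M$2$4 = 0" "M$3$1 = 0" "M$3$2 = 0" "M$4$1 = 0" "M$4$2 = 0"
    by (simp_all only: entry row1 row2 M1 M2 inner_minus_right) (simp_all add: inner_axis_axis)
  define p q r s where "p = M$3$3" "q = M$3$4" "r = M$4$3" "s = M$4$4"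
  have d: "- (p * s - q * r) = 1" using det_4_block_diag[OF z] dM by (simp add: p_q_r_s_def)
  have "(transpose M ** M) $ 3 $ 3 = 1" "(transpose M ** M) $ 4 $ 4 = 1" "(transpose M ** M) $ 3 $ 4 = 0"
    using oM by (simp_all add: orthogonal_matrix mat_def)
  then have ort: "p * p + r * r = 1" "q * q + s * s = 1" "p * q + r * s = 0"
    by (simp_all add: matrix_matrix_mult_def transpose_def sum_4 z p_q_r_s_def)
  \<comment> \<open>the lower right block is orthogonal with determinant $-1$, i.e. a reflection\<close>
  have "(q - r)^2 + (s + p)^2 = 0" using d ort by (simp add: power2_eq_square algebra_simps)
  then have "q = r" "s = - p" by (smt (verit) sum_power2_eq_zero_iff)+
  then show ?thesis using ort
    by (simp add: vec_eq_iff forall_4 matrix_matrix_mult_def sum_4 z mat_def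
        flip: p_q_r_s_def)
qed

lemma orthogonal_det1_involution_of_eigenvectors:
  fixes A :: "real^4^4"
  assumes oA: "orthogonal_matrix A" and dA: "det A = 1"
    and Ax: "A *v x = x" and Au: "A *v u = - u" and "x \<noteq> 0" "u \<noteq> 0"
  shows "A ** A = mat 1"
proof -
  define e1 e2 where "e1 = x /\<^sub>R norm x" "e2 = u /\<^sub>R norm u"
  have Ae: "A *v e1 = e1" "A *v e2 = - e2"
    using Ax Au by (simp_all add: e1_e2_def matrix_vector_mult_scaleR)
  have "e1 \<bullet> e2 = 0" using orthogonal_matrix_inner[OF oA, of e1 e2] Ae by simp
  moreover have "norm e1 = 1" "norm e2 = 1" using assms by (simp_all add: e1_e2_def)
  ultimately obtain Q where oQ: "orthogonal_matrix Q" and Qe: "Q *v axis 1 1 = e1" "Q *v axis 2 1 = e2"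
    by (metis orthonormal_pair_extends_to_orthogonal_matrix matrix_vector_mult_basis)
  have QQ: "transpose Q ** Q = mat 1" "Q ** transpose Q = mat 1"
    using oQ by (simp_all add: orthogonal_matrix_def)
  define M where "M = transpose Q ** A ** Q"
  have QTe: "transpose Q *v e1 = axis 1 1" "transpose Q *v e2 = axis 2 1"
    using Qe QQ(1) by (metis matrix_vector_mul_assoc matrix_vector_mul_lid)+
  have Mv: "M *v y = transpose Q *v (A *v (Q *v y))" for y
    by (simp add: M_def matrix_vector_mul_assoc matrix_mul_assoc del: transpose_matrix_vector)
  have "orthogonal_matrix M"
    unfolding M_def by (intro orthogonal_matrix_mul oA oQ) (simp add: oQ)
  moreover have "det M = 1"
  proof -
    have "det M = det (transpose Q) * det A * det Q" by (simp add: M_def det_mul)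
    also have "\<dots> = det (transpose Q ** Q)" using dA by (simp add: det_mul)
    finally show ?thesis using QQ(1) by simp
  qed
  moreover have "M *v axis 1 1 = axis 1 1" "M *v axis 2 1 = - axis 2 1"
    by (simp_all add: Mv Qe Ae QTe linear_neg[OF matrix_vector_mul_linear] del: transpose_matrix_vector)
  ultimately have MM: "M ** M = mat 1" by (rule orthogonal_det1_axis_reflection_involution)
  have "A ** A = Q ** (M ** M) ** transpose Q"
    by (simp add: M_def matrix_mul_assoc QQ(2)) (simp flip: matrix_mul_assoc add: QQ(2))
  then show ?thesis by (simp add: MM QQ(2))
qed

lemma induced_by_obtain_matrix:
  assumes "induced_by n emb gam G Ghat" "g \<in> G"
  obtains A where "A \<in> SO4" "\<And>v. v \<in> Knn_verts n \<Longrightarrow> A *v emb v = emb (g v)"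
    "\<And>v w. v \<in> partV n \<Longrightarrow> w \<in> partW n \<Longrightarrow>
       (\<lambda>x. A *v x) ` path_image (gam v w) = edge_image n gam (g v) (g w)"
proof -
  obtain \<phi> where \<phi>: "\<phi> \<in> iso (matrix_group Ghat) (perm_group G)"
    and act: "\<forall>A\<in>Ghat. (\<forall>v\<in>Knn_verts n. A *v emb v = emb (\<phi> A v)) \<and>
       (\<forall>v\<in>partV n. \<forall>w\<in>partW n.
          (\<lambda>x. A *v x) ` path_image (gam v w) = edge_image n gam (\<phi> A v) (\<phi> A w))"
    using assms(1) unfolding induced_by_def by blast
  have "\<phi> ` Ghat = G" using \<phi> by (auto simp: iso_def bij_betw_def matrix_group_def perm_group_def)
  then obtain A where "A \<in> Ghat" "\<phi> A = g" using assms(2) by blast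
  moreover have "Ghat \<subseteq> SO4" using assms(1) by (simp add: induced_by_def)
  ultimately show thesis using act that by blast
qed

lemma induced_square_eq_id_if_fixes_vertex:
  assumes emb: "Knn_embedding n emb gam" and ind: "induced_by n emb gam G Ghat"
    and GAut: "G \<subseteq> Aut_Knn n" and g: "g \<in> G" and gV: "g ` partV n = partW n"
    and v: "v \<in> partV n" and ggv: "g (g v) = v"
  shows "g \<circ> g = id"
proof -
  obtain A where A: "A \<in> SO4" and Aemb: "\<And>v. v \<in> Knn_verts n \<Longrightarrow> A *v emb v = emb (g v)"
    and Aarc: "\<And>v w. v \<in> partV n \<Longrightarrow> w \<in> partW n \<Longrightarrow>
       (\<lambda>x. A *v x) ` path_image (gam v w) = edge_image n gam (g v) (g w)"
    using induced_by_obtain_matrix[OF ind g] by blast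
  define w where "w = g v"
  have w: "w \<in> partW n" "w \<notin> partV n" using v gV partV_Int_partW by (auto simp: w_def)
  have verts: "v \<in> Knn_verts n" "w \<in> Knn_verts n" using v w by (auto simp: Knn_verts_def)
  have inj: "inj_on emb (Knn_verts n)" and arc: "arc (gam v w)"
    and ends: "pathstart (gam v w) = emb v" "pathfinish (gam v w) = emb w"
    and onS3: "path_image (gam v w) \<subseteq> S3"
    using emb v w(1) unfolding Knn_embedding_def by blast+
  have Av: "A *v emb v = emb w" "A *v emb w = emb v"
    using Aemb[OF verts(1)] Aemb[OF verts(2)] ggv by (simp_all add: w_def)
  have "(\<lambda>x. A *v x) ` path_image (gam v w) = path_image (gam v w)"
    using Aarc[OF v w(1)] w ggv by (simp add: w_def edge_image_def)
  then obtain z where z: "z \<in> path_image (gam v w)" "A *v z = z"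
    using arc_fixed_point_if_endpoints_swapped[OF arc, of "\<lambda>x. A *v x"] ends Av
    by (auto intro: matrix_vector_mult_linear_continuous_on)
  have "z \<noteq> 0" using z(1) onS3 by (auto simp: S3_def)
  moreover have "emb v - emb w \<noteq> 0"
    using inj verts v w(2) by (auto dest: inj_onD)
  moreover have "A *v (emb v - emb w) = - (emb v - emb w)"
    using Av by (simp add: matrix_vector_mult_diff_distrib)
  moreover have "orthogonal_matrix A" "det A = 1" using A by (simp_all add: SO4_def)
  ultimately have AA: "A ** A = mat 1"
    using orthogonal_det1_involution_of_eigenvectors z(2) by blast
  have perm: "g \<circ> g permutes Knn_verts n"
    using g GAut by (auto simp: Aut_Knn_def intro: permutes_compose)
  show ?thesis
  proof
    fix x
    show "(g \<circ> g) x = id x"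
    proof (cases "x \<in> Knn_verts n")
      case True
      then have "g x \<in> Knn_verts n" using g GAut by (auto simp: Aut_Knn_def permutes_in_image)
      then have "emb ((g \<circ> g) x) = (A ** A) *v emb x"
        using Aemb True by (simp flip: matrix_vector_mul_assoc)
      then show ?thesis
        using AA True inj permutes_in_image[OF perm, of x] by (auto dest: inj_onD)
    next
      case False
      then show ?thesis using permutes_not_in[OF perm] by simp
    qed
  qed
qed

theorem lemma6:
  fixes n :: nat and G H :: "(vtx \<Rightarrow> vtx) set"
    and emb :: "vtx \<Rightarrow> real^4" and gam :: "vtx \<Rightarrow> vtx \<Rightarrow> real \<Rightarrow> real^4"
    and Ghat :: "(real^4^4) set"
  assumes GAut: "G \<subseteq> Aut_Knn n"
    and GS4: "sym_group 4 \<cong> perm_group G"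
    and HG: "H \<subseteq> G"
    and HA4: "alt_group 4 \<cong> perm_group H"
    and emb: "Knn_embedding n emb gam"
    and ind: "induced_by n emb gam G Ghat"
    and invol: "\<And>h. h \<in> H \<Longrightarrow> h \<noteq> id \<Longrightarrow> h \<circ> h = id \<Longrightarrow>
                 card {v \<in> partV n. h v = v} = 2 \<and> card {w \<in> partW n. h w = w} = 2"
  shows "\<forall>g\<in>G. g ` partV n = partV n \<and> g ` partW n = partW n"
proof (cases "n = 0")
  case True
  then show ?thesis by (simp add: partV_def partW_def)
next
  case False
  then have "0 < n" by simp
  have inj: "inj f" if "f \<in> G" for f using that GAut by (auto simp: Aut_Knn_def permutes_inj)
  have grpG: "group (perm_group G)" by (rule group_perm_group_if_iso[OF sym_group_is_group GS4 inj])
  have "\<forall>g\<in>G. g ` partV n = partV n"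
  proof (rule ccontr)
    assume "\<not> (\<forall>g\<in>G. g ` partV n = partV n)"
    then obtain g where g: "g \<in> G" "g ` partV n = partW n" "g \<circ> g \<noteq> id" "(g \<circ> g) \<circ> (g \<circ> g) = id"
      using side_swapping_element_of_order_four[OF GAut \<open>0 < n\<close> GS4 grpG] by blast
    then have "card {v \<in> partV n. (g \<circ> g) v = v} = 2" using invol square_in_alt_subgroup[OF inj GS4 HG HA4 g(1)] by blast
    then obtain v where "v \<in> partV n" "g (g v) = v"
      by (metis (mono_tags, lifting) card.empty empty_Collect_eq zero_neq_numeral comp_apply)
    then show False using induced_square_eq_id_if_fixes_vertex[OF emb ind GAut g(1,2)] g(3) by blast
  qed
  then show ?thesis
    using Aut_Knn_preserves_or_swaps_parts[OF _ \<open>0 < n\<close>] GAut partV_Int_partW \<open>0 < n\<close>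
    by (metis (no_types, lifting) subsetD)
qed

end
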